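(* Let $R$ be an associative unital algebra over a field $k$, let $P(t)\in R[t]$ be a monic polynomial of degree $n$ ($t$ central), and let $S$ be a set of pseudo-roots of $P(t)$ containing elements $a_1,\dots,a_n$ with $P(t)=(t-a_1)(t-a_2)\cdots(t-a_n)$. Let $\Gamma=\Gamma(P,S)$ be the graph of right divisors and $\mathcal P(t)\in A(\Gamma)[t]$ the associated polynomial. Then there is a canonical algebra homomorphism $\alpha:A(\Gamma)\to R$, sending the edge from $(t-a)B(t)$ to $B(t)$ to $a$, such that the induced homomorphism $\hat\alpha:A(\Gamma)[t]\to R[t]$ maps $\mathcal P(t)$ to $P(t)$.
   Context: An element $x\in R$ is a pseudo-root of $P(t)$ if $P(t)=Q_1(t)(t-x)Q_2(t)$ for some $Q_1,Q_2\in R[t]$. The graph $\Gamma(P,S)$: its vertices are the monic polynomials $B(t)\in R[t]$ of degree between $0$ and $n$ such that $P(t)=Q(t)B(t)$ for some $Q(t)\in R[t]$; there is an edge from $B_1(t)$ to $B_2(t)$ (tail $B_1$, head $B_2$) whenever $B_1(t)=(t-x)B_2(t)$ for some $x\in S$. For a directed graph $\Gamma=(V,E)$ (each edge $e$ has tail $t(e)$ and head $h(e)$; a directed path is $e_1,\dots,e_k$ with $t(e_{i+1})=h(e_i)$), $A(\Gamma)$ is the quotient of the free associative $k$-algebra on $E$ by the relations that for any two directed paths $(e_1,\dots,e_k)$, $(e'_1,\dots,e'_l)$ with common origin and common terminus, $(t-e_1)\cdots(t-e_k)=(t-e'_1)\cdots(t-e'_l)$ coefficientwise. Here $\mathcal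 P(t)=(t-f_1)\cdots(t-f_m)\in A(\Gamma)[t]$ for any directed path $(f_1,\dots,f_m)$ in $\Gamma(P,S)$ from the vertex $P(t)$ to the vertex $1$ (such a path exists and $\mathcal P(t)$ does not depend on its choice). *)

theory Defs
  imports "HOL-Algebra.UnivPoly" "HOL-Algebra.QuotRing"
begin

text \<open>For a ring R, the polynomial ring R[t] is the HOL-Algebra structure UP R
  (t commutes with all coefficients).\<close>

definition polyvar :: "('a, 'm) ring_scheme \<Rightarrow> nat \<Rightarrow> 'a" where
  "polyvar R = monom (UP R) \<one>\<^bsub>R\<^esub> 1"

definition lin :: "('a, 'm) ring_scheme \<Rightarrow> 'a \<Rightarrow> nat \<Rightarrow> 'a" where
  "lin R x = polyvar R \<ominus>\<^bsub>UP R\<^esub> monom (UP R) x 0"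

definition lin_prod :: "('a, 'm) ring_scheme \<Rightarrow> 'a list \<Rightarrow> nat \<Rightarrow> 'a" where
  "lin_prod R xs = foldr (\<lambda>x Q. lin R x \<otimes>\<^bsub>UP R\<^esub> Q) xs \<one>\<^bsub>UP R\<^esub>"

definition monic_poly :: "('a, 'm) ring_scheme \<Rightarrow> (nat \<Rightarrow> 'a) \<Rightarrow> bool" where
  "monic_poly R B \<longleftrightarrow> B \<in> carrier (UP R) \<and> coeff (UP R) B (deg R B) = \<one>\<^bsub>R\<^esub>"

definition pseudo_root :: "('a, 'm) ring_scheme \<Rightarrow> (nat \<Rightarrow> 'a) \<Rightarrow> 'a \<Rightarrow> bool" where
  "pseudo_root R P x \<longleftrightarrow> x \<in> carrier R \<and>
     (\<exists>Q1 \<in> carrier (UP R). \<exists>Q2 \<in> carrier (UP R).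
        P = Q1 \<otimes>\<^bsub>UP R\<^esub> lin R x \<otimes>\<^bsub>UP R\<^esub> Q2)"

definition div_vertices :: "('a, 'm) ring_scheme \<Rightarrow> (nat \<Rightarrow> 'a) \<Rightarrow> nat \<Rightarrow> (nat \<Rightarrow> 'a) set" where
  "div_vertices R P n = {B. monic_poly R B \<and> deg R B \<le> n \<and>
       (\<exists>Q \<in> carrier (UP R). P = Q \<otimes>\<^bsub>UP R\<^esub> B)}"

text \<open>An edge is the pair (tail, head) = (B1, B2) with B1 = (t - x) B2 for some x in S.\<close>
definition div_edges :: "('a, 'm) ring_scheme \<Rightarrow> (nat \<Rightarrow> 'a) \<Rightarrow> nat \<Rightarrow> 'a set
     \<Rightarrow> ((nat \<Rightarrow> 'a) \<times> (nat \<Rightarrow> 'a)) set" where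
  "div_edges R P n S = {(B1, B2). B1 \<in> div_vertices R P n \<and> B2 \<in> div_vertices R P n \<and>
       (\<exists>x \<in> S. B1 = lin R x \<otimes>\<^bsub>UP R\<^esub> B2)}"

inductive is_path :: "('v \<times> 'v) set \<Rightarrow> 'v \<Rightarrow> ('v \<times> 'v) list \<Rightarrow> 'v \<Rightarrow> bool"
  for E where
  path_nil: "is_path E v [] v"
| path_cons: "(v, u) \<in> E \<Longrightarrow> is_path E u es w \<Longrightarrow> is_path E v ((v, u) # es) w"

text \<open>Noncommutative polynomials: finitely supported K-valued functions on words over E;
  the product is concatenation-convolution.\<close>
definition free_alg :: "('k, 'b) ring_scheme \<Rightarrow> 'e set \<Rightarrow> ('e list \<Rightarrow> 'k) ring" where
  "free_alg K E = \<lparr>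
     carrier = {f. (\<forall>w. f w \<in> carrier K) \<and> (\<forall>w. f w \<noteq> \<zero>\<^bsub>K\<^esub> \<longrightarrow> set w \<subseteq> E)
                   \<and> finite {w. f w \<noteq> \<zero>\<^bsub>K\<^esub>}},
     mult = (\<lambda>f g w. \<Oplus>\<^bsub>K\<^esub> i \<in> {..length w}. f (take i w) \<otimes>\<^bsub>K\<^esub> g (drop i w)),
     one = (\<lambda>w. if w = [] then \<one>\<^bsub>K\<^esub> else \<zero>\<^bsub>K\<^esub>),
     zero = (\<lambda>w. \<zero>\<^bsub>K\<^esub>),
     add = (\<lambda>f g w. f w \<oplus>\<^bsub>K\<^esub> g w) \<rparr>"

definition free_gen :: "('k, 'b) ring_scheme \<Rightarrow> 'e \<Rightarrow> 'e list \<Rightarrow> 'k" where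
  "free_gen K e = (\<lambda>w. if w = [e] then \<one>\<^bsub>K\<^esub> else \<zero>\<^bsub>K\<^esub>)"

definition free_scalar :: "('k, 'b) ring_scheme \<Rightarrow> 'k \<Rightarrow> 'e list \<Rightarrow> 'k" where
  "free_scalar K c = (\<lambda>w. if w = [] then c else \<zero>\<^bsub>K\<^esub>)"

definition path_relations :: "('k, 'b) ring_scheme \<Rightarrow> 'v set \<Rightarrow> ('v \<times> 'v) set
     \<Rightarrow> (('v \<times> 'v) list \<Rightarrow> 'k) set" where
  "path_relations K V E = {r. \<exists>v w p q j. v \<in> V \<and> w \<in> V \<and> is_path E v p w \<and> is_path E v q w \<and>
       r = coeff (UP (free_alg K E)) (lin_prod (free_alg K E) (map (free_gen K) p)) j
           \<ominus>\<^bsub>free_alg K E\<^esub>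
           coeff (UP (free_alg K E)) (lin_prod (free_alg K E) (map (free_gen K) q)) j}"

definition rel_ideal :: "('k, 'b) ring_scheme \<Rightarrow> 'v set \<Rightarrow> ('v \<times> 'v) set
     \<Rightarrow> (('v \<times> 'v) list \<Rightarrow> 'k) set" where
  "rel_ideal K V E = genideal (free_alg K E) (path_relations K V E)"

definition graph_alg :: "('k, 'b) ring_scheme \<Rightarrow> 'v set \<Rightarrow> ('v \<times> 'v) set
     \<Rightarrow> (('v \<times> 'v) list \<Rightarrow> 'k) set ring" where
  "graph_alg K V E = free_alg K E Quot rel_ideal K V E"

definition graph_class :: "('k, 'b) ring_scheme \<Rightarrow> 'v set \<Rightarrow> ('v \<times> 'v) set
     \<Rightarrow> (('v \<times> 'v) list \<Rightarrow> 'k) \<Rightarrow> (('v \<times> 'v) list \<Rightarrow> 'k) set" where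
  "graph_class K V E f = rel_ideal K V E +>\<^bsub>free_alg K E\<^esub> f"

definition graph_path_poly :: "('k, 'b) ring_scheme \<Rightarrow> 'v set \<Rightarrow> ('v \<times> 'v) set
     \<Rightarrow> ('v \<times> 'v) list \<Rightarrow> nat \<Rightarrow> (('v \<times> 'v) list \<Rightarrow> 'k) set" where
  "graph_path_poly K V E p =
     lin_prod (graph_alg K V E) (map (\<lambda>e. graph_class K V E (free_gen K e)) p)"

end

theory Submission
  imports Defs
begin

text \<open>Labelling the edge from \<open>(t - x) B\<close> to \<open>B\<close> by \<open>x\<close> is well defined, because a monic
  polynomial can be cancelled on the right. Since \<open>k\<close> is central in \<open>R\<close>, the labels together with
  the structure map \<open>k \<rightarrow> R\<close> extend to an evaluation homomorphism from the free algebra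
  \<open>k\<langle>E\<rangle>\<close> to \<open>R\<close>. Along a path from \<open>B\<close> to \<open>C\<close> with labels \<open>x\<^sub>1, \<dots>, x\<^sub>k\<close> one has
  \<open>B = (t - x\<^sub>1) \<cdots> (t - x\<^sub>k) C\<close>, so two paths with common ends give the same product after
  cancelling the monic \<open>C\<close>. Hence the evaluation kills every defining relation of \<open>A(\<Gamma>)\<close>
  and factors through a homomorphism \<open>\<alpha>\<close> on \<open>A(\<Gamma>)\<close>, and applying \<open>\<alpha>\<close> coefficientwise to
  the product along a path from \<open>P\<close> to \<open>1\<close> gives back \<open>P\<close>.\<close>

section \<open>Splittings of words\<close>

definition splits :: "'a list \<Rightarrow> ('a list \<times> 'a list) set" where
  "splits w = {(u, v). u @ v = w}"

lemma splits_eq_image: "splits w = (\<lambda>i. (take i w, drop i w)) ` {..length w}"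
proof
  show "splits w \<subseteq> (\<lambda>i. (take i w, drop i w)) ` {..length w}"
  proof
    fix p assume "p \<in> splits w"
    then show "p \<in> (\<lambda>i. (take i w, drop i w)) ` {..length w}"
      by (intro image_eqI[where x = "length (fst p)"]) (auto simp: splits_def)
  qed
qed (auto simp: splits_def)

lemma finite_splits [simp]: "finite (splits w)"
  by (simp add: splits_eq_image)

lemma inj_on_take_drop: "inj_on (\<lambda>i. (take i w, drop i w)) {..length w}"
  by (rule inj_onI) (metis Pair_inject atMost_iff length_take min.absorb2)

context abelian_monoid
begin

lemma finsum_take_drop_eq_splits:
  assumes "\<And>u v. F u v \<in> carrier G"
  shows "(\<Oplus>i\<in>{..length w}. F (take i w) (drop i w)) = (\<Oplus>p\<in>splits w. F (fst p) (snd p))"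
  unfolding splits_eq_image by (subst finsum_reindex) (auto simp: assms inj_on_take_drop)

lemma finsum_Sigma:
  assumes "finite A" "\<And>i. i \<in> A \<Longrightarrow> finite (B i)" "\<And>i j. g i j \<in> carrier G"
  shows "(\<Oplus>i\<in>A. \<Oplus>j\<in>B i. g i j) = (\<Oplus>p\<in>Sigma A B. g (fst p) (snd p))"
proof -
  have Sigma_UN: "Sigma A B = (\<Union>i\<in>A. Pair i ` B i)" by auto
  have "(\<Oplus>p\<in>Sigma A B. g (fst p) (snd p)) = (\<Oplus>i\<in>A. \<Oplus>p\<in>Pair i ` B i. g (fst p) (snd p))"
    unfolding Sigma_UN
    by (rule add.finprod_UN_disjoint) (auto simp: assms pairwise_def disjnt_def)
  also have "\<dots> = (\<Oplus>i\<in>A. \<Oplus>j\<in>B i. g i j)"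
    by (intro finsum_cong') (auto simp: assms finsum_reindex inj_on_def)
  finally show ?thesis by simp
qed

lemma finsum_splits_assoc:
  assumes "\<And>u v y. F u v y \<in> carrier G"
  shows "(\<Oplus>p\<in>splits w. \<Oplus>q\<in>splits (fst p). F (fst q) (snd q) (snd p))
       = (\<Oplus>p\<in>splits w. \<Oplus>q\<in>splits (snd p). F (fst p) (fst q) (snd q))"
proof -
  let ?L = "Sigma (splits w) (\<lambda>p. splits (fst p))" and ?R = "Sigma (splits w) (\<lambda>p. splits (snd p))"
  let ?h = "\<lambda>z. ((fst (snd z), snd (snd z) @ snd (fst z)), (snd (snd z), snd (fst z)))"
  have img: "?h ` ?L = ?R"
  proof
    show "?R \<subseteq> ?h ` ?L"
    proof
      fix z assume "z \<in> ?R"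
      then obtain u v y where "z = ((u, v @ y), (v, y))" "u @ v @ y = w"
        by (auto simp: splits_def)
      then show "z \<in> ?h ` ?L"
        by (intro image_eqI[where x = "((u @ v, y), (u, v))"]) (auto simp: splits_def)
    qed
  qed (auto simp: splits_def)
  have "inj_on ?h ?L"
    by (rule inj_onI) (auto simp: splits_def)
  then have "(\<Oplus>z\<in>?R. F (fst (fst z)) (fst (snd z)) (snd (snd z)))
      = (\<Oplus>z\<in>?L. F (fst (snd z)) (snd (snd z)) (snd (fst z)))"
    unfolding img[symmetric] by (subst finsum_reindex) (auto simp: assms)
  then show ?thesis
    by (simp add: finsum_Sigma assms)
qed

lemma finsum_finsum_splits:
  assumes "finite W" "\<And>p. H p \<in> carrier G"
  shows "(\<Oplus>w\<in>W. \<Oplus>p\<in>splits w. H p) = (\<Oplus>p\<in>{(u, v). u @ v \<in> W}. H p)"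
proof -
  have img: "snd ` Sigma W splits = {(u, v). u @ v \<in> W}"
    by (force simp: splits_def)
  have "inj_on snd (Sigma W splits)"
    by (rule inj_onI) (auto simp: splits_def)
  then have "(\<Oplus>p\<in>{(u, v). u @ v \<in> W}. H p) = (\<Oplus>z\<in>Sigma W splits. H (snd z))"
    unfolding img[symmetric] by (subst finsum_reindex) (auto simp: assms)
  then show ?thesis
    by (simp add: finsum_Sigma assms)
qed

end

section \<open>The free algebra\<close>

locale free_alg_ring = K: ring K for K :: "('k, 'b) ring_scheme" (structure) and E :: "'e set"
begin

abbreviation FA where "FA \<equiv> free_alg K E"

lemma free_alg_carrier_iff:
  "f \<in> carrier FA \<longleftrightarrow> (\<forall>w. f w \<in> carrier K) \<and> (\<forall>w. f w \<noteq> \<zero> \<longrightarrow> set w \<subseteq> E)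
      \<and> finite {w. f w \<noteq> \<zero>}"
  by (simp add: free_alg_def)

lemma free_alg_val: "f \<in> carrier FA \<Longrightarrow> f w \<in> carrier K"
  by (simp add: free_alg_carrier_iff)

lemma free_alg_support: "f \<in> carrier FA \<Longrightarrow> f w \<noteq> \<zero> \<Longrightarrow> set w \<subseteq> E"
  by (simp add: free_alg_carrier_iff)

lemma free_alg_finite_support: "f \<in> carrier FA \<Longrightarrow> finite {w. f w \<noteq> \<zero>}"
  by (simp add: free_alg_carrier_iff)

lemma free_alg_add: "f \<oplus>\<^bsub>FA\<^esub> g = (\<lambda>w. f w \<oplus> g w)"
  by (simp add: free_alg_def)

lemma free_alg_zero: "\<zero>\<^bsub>FA\<^esub> = (\<lambda>w. \<zero>)"
  by (simp add: free_alg_def)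

lemma free_alg_one: "\<one>\<^bsub>FA\<^esub> = (\<lambda>w. if w = [] then \<one> else \<zero>)"
  by (simp add: free_alg_def)

lemma free_alg_mult:
  assumes "f \<in> carrier FA" "g \<in> carrier FA"
  shows "f \<otimes>\<^bsub>FA\<^esub> g = (\<lambda>w. \<Oplus>p\<in>splits w. f (fst p) \<otimes> g (snd p))"
  unfolding free_alg_def
  by (auto intro!: K.finsum_take_drop_eq_splits simp: free_alg_val assms)

lemma free_alg_mult_nonzero:
  assumes f: "f \<in> carrier FA" and g: "g \<in> carrier FA" and nz: "(f \<otimes>\<^bsub>FA\<^esub> g) w \<noteq> \<zero>"
  obtains u v where "u @ v = w" "f u \<noteq> \<zero>" "g v \<noteq> \<zero>"
proof -
  have "\<exists>p\<in>splits w. f (fst p) \<otimes> g (snd p) \<noteq> \<zero>"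
  proof (rule ccontr)
    assume "\<not> ?thesis"
    then have "(f \<otimes>\<^bsub>FA\<^esub> g) w = (\<Oplus>p\<in>splits w. \<zero>)"
      unfolding free_alg_mult[OF f g] by (intro K.finsum_cong') auto
    with nz show False by simp
  qed
  then obtain p where p: "p \<in> splits w" "f (fst p) \<otimes> g (snd p) \<noteq> \<zero>" ..
  then have "f (fst p) \<noteq> \<zero>" "g (snd p) \<noteq> \<zero>"
    using free_alg_val[OF f] free_alg_val[OF g] by auto
  with p(1) show thesis
    by (intro that) (auto simp: splits_def)
qed

lemma free_alg_single_closed:
  assumes "c \<in> carrier K" "set w \<subseteq> E"
  shows "(\<lambda>u. if u = w then c else \<zero>) \<in> carrier FA"
proof -
  have "{u. (if u = w then c else \<zero>) \<noteq> \<zero>} \<subseteq> {w}" by auto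
  then show ?thesis
    using assms by (auto simp: free_alg_carrier_iff intro: finite_subset)
qed

lemma free_alg_one_closed: "\<one>\<^bsub>FA\<^esub> \<in> carrier FA"
  unfolding free_alg_one by (rule free_alg_single_closed) auto

lemma free_gen_closed: "e \<in> E \<Longrightarrow> free_gen K e \<in> carrier FA"
  unfolding free_gen_def by (rule free_alg_single_closed) auto

lemma free_scalar_closed: "c \<in> carrier K \<Longrightarrow> free_scalar K c \<in> carrier FA"
  unfolding free_scalar_def by (rule free_alg_single_closed) auto

lemma free_alg_add_closed:
  assumes f: "f \<in> carrier FA" and g: "g \<in> carrier FA"
  shows "f \<oplus>\<^bsub>FA\<^esub> g \<in> carrier FA"
proof -
  have vals: "\<And>w. f w \<in> carrier K" "\<And>w. g w \<in> carrier K"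
    using f g by (auto simp: free_alg_val)
  have "{w. f w \<oplus> g w \<noteq> \<zero>} \<subseteq> {w. f w \<noteq> \<zero>} \<union> {w. g w \<noteq> \<zero>}"
    using vals by auto
  moreover have "finite ({w. f w \<noteq> \<zero>} \<union> {w. g w \<noteq> \<zero>})"
    using f g by (simp add: free_alg_finite_support)
  moreover have "set w \<subseteq> E" if "f w \<oplus> g w \<noteq> \<zero>" for w
    using that vals free_alg_support[OF f, of w] free_alg_support[OF g, of w]
    by (cases "f w = \<zero>") auto
  ultimately show ?thesis
    using vals by (auto simp: free_alg_add free_alg_carrier_iff intro: finite_subset)
qed

lemma free_alg_mult_closed:
  assumes f: "f \<in> carrier FA" and g: "g \<in> carrier FA"
  shows "f \<otimes>\<^bsub>FA\<^esub> g \<in> carrier FA"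
proof -
  have "{w. (f \<otimes>\<^bsub>FA\<^esub> g) w \<noteq> \<zero>} \<subseteq> (\<lambda>(u, v). u @ v) ` ({u. f u \<noteq> \<zero>} \<times> {v. g v \<noteq> \<zero>})"
  proof
    fix w assume "w \<in> {w. (f \<otimes>\<^bsub>FA\<^esub> g) w \<noteq> \<zero>}"
    then obtain u v where "u @ v = w" "f u \<noteq> \<zero>" "g v \<noteq> \<zero>"
      using free_alg_mult_nonzero[OF f g] by blast
    then show "w \<in> (\<lambda>(u, v). u @ v) ` ({u. f u \<noteq> \<zero>} \<times> {v. g v \<noteq> \<zero>})" by auto
  qed
  then have "finite {w. (f \<otimes>\<^bsub>FA\<^esub> g) w \<noteq> \<zero>}"
    by (rule finite_subset) (simp add: f g free_alg_finite_support)
  moreover have "set w \<subseteq> E" if nz: "(f \<otimes>\<^bsub>FA\<^esub> g) w \<noteq> \<zero>" for w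
  proof -
    obtain u v where "u @ v = w" "f u \<noteq> \<zero>" "g v \<noteq> \<zero>"
      using free_alg_mult_nonzero[OF f g nz] by blast
    then show ?thesis using free_alg_support[OF f, of u] free_alg_support[OF g, of v] by auto
  qed
  moreover have "(f \<otimes>\<^bsub>FA\<^esub> g) w \<in> carrier K" for w
    by (auto simp: free_alg_mult f g free_alg_val intro!: K.finsum_closed)
  ultimately show ?thesis by (simp add: free_alg_carrier_iff)
qed

lemma free_alg_m_assoc:
  assumes f: "f \<in> carrier FA" and g: "g \<in> carrier FA" and h: "h \<in> carrier FA"
  shows "(f \<otimes>\<^bsub>FA\<^esub> g) \<otimes>\<^bsub>FA\<^esub> h = f \<otimes>\<^bsub>FA\<^esub> (g \<otimes>\<^bsub>FA\<^esub> h)"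
proof
  fix w
  have c: "\<And>u. f u \<in> carrier K" "\<And>u. g u \<in> carrier K" "\<And>u. h u \<in> carrier K"
    using f g h by (auto simp: free_alg_val)
  have "((f \<otimes>\<^bsub>FA\<^esub> g) \<otimes>\<^bsub>FA\<^esub> h) w
      = (\<Oplus>p\<in>splits w. (\<Oplus>q\<in>splits (fst p). f (fst q) \<otimes> g (snd q)) \<otimes> h (snd p))"
    by (subst free_alg_mult[OF free_alg_mult_closed[OF f g] h], subst free_alg_mult[OF f g]) simp
  also have "\<dots> = (\<Oplus>p\<in>splits w. \<Oplus>q\<in>splits (fst p). f (fst q) \<otimes> g (snd q) \<otimes> h (snd p))"
    by (intro K.finsum_cong') (auto simp: K.finsum_ldistr c)
  also have "\<dots> = (\<Oplus>p\<in>splits w. \<Oplus>q\<in>splits (snd p). f (fst p) \<otimes> (g (fst q) \<otimes> h (snd q)))"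
    by (subst K.finsum_splits_assoc) (simp_all add: c K.m_assoc)
  also have "\<dots> = (\<Oplus>p\<in>splits w. f (fst p) \<otimes> (\<Oplus>q\<in>splits (snd p). g (fst q) \<otimes> h (snd q)))"
    by (intro K.finsum_cong') (auto simp: K.finsum_rdistr c)
  also have "\<dots> = (f \<otimes>\<^bsub>FA\<^esub> (g \<otimes>\<^bsub>FA\<^esub> h)) w"
    by (subst free_alg_mult[OF f free_alg_mult_closed[OF g h]], subst free_alg_mult[OF g h]) simp
  finally show "((f \<otimes>\<^bsub>FA\<^esub> g) \<otimes>\<^bsub>FA\<^esub> h) w = (f \<otimes>\<^bsub>FA\<^esub> (g \<otimes>\<^bsub>FA\<^esub> h)) w" .
qed

lemma free_alg_unit_mult:
  assumes f: "f \<in> carrier FA"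
  shows "\<one>\<^bsub>FA\<^esub> \<otimes>\<^bsub>FA\<^esub> f = f" and "f \<otimes>\<^bsub>FA\<^esub> \<one>\<^bsub>FA\<^esub> = f"
proof -
  show "\<one>\<^bsub>FA\<^esub> \<otimes>\<^bsub>FA\<^esub> f = f"
  proof
    fix w
    have "(\<one>\<^bsub>FA\<^esub> \<otimes>\<^bsub>FA\<^esub> f) w = (\<Oplus>p\<in>splits w. if ([], w) = p then f (snd p) else \<zero>)"
      by (subst free_alg_mult[OF free_alg_one_closed f], unfold free_alg_one)
        (auto simp: free_alg_val f splits_def intro!: K.finsum_cong')
    also have "\<dots> = f w"
      by (rule K.add.finprod_singleton[of "([], w)" "splits w" "\<lambda>p. f (snd p)", simplified])
        (simp_all add: splits_def free_alg_val f)
    finally show "(\<one>\<^bsub>FA\<^esub> \<otimes>\<^bsub>FA\<^esub> f) w = f w" .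
  qed
  show "f \<otimes>\<^bsub>FA\<^esub> \<one>\<^bsub>FA\<^esub> = f"
  proof
    fix w
    have "(f \<otimes>\<^bsub>FA\<^esub> \<one>\<^bsub>FA\<^esub>) w = (\<Oplus>p\<in>splits w. if (w, []) = p then f (fst p) else \<zero>)"
      by (subst free_alg_mult[OF f free_alg_one_closed], unfold free_alg_one)
        (auto simp: free_alg_val f splits_def intro!: K.finsum_cong')
    also have "\<dots> = f w"
      by (rule K.add.finprod_singleton[of "(w, [])" "splits w" "\<lambda>p. f (fst p)", simplified])
        (simp_all add: splits_def free_alg_val f)
    finally show "(f \<otimes>\<^bsub>FA\<^esub> \<one>\<^bsub>FA\<^esub>) w = f w" .
  qed
qed

lemma free_alg_distr:
  assumes f: "f \<in> carrier FA" and g: "g \<in> carrier FA" and h: "h \<in> carrier FA"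
  shows "(f \<oplus>\<^bsub>FA\<^esub> g) \<otimes>\<^bsub>FA\<^esub> h = f \<otimes>\<^bsub>FA\<^esub> h \<oplus>\<^bsub>FA\<^esub> g \<otimes>\<^bsub>FA\<^esub> h"
    and "h \<otimes>\<^bsub>FA\<^esub> (f \<oplus>\<^bsub>FA\<^esub> g) = h \<otimes>\<^bsub>FA\<^esub> f \<oplus>\<^bsub>FA\<^esub> h \<otimes>\<^bsub>FA\<^esub> g"
proof -
  have c: "\<And>u. f u \<in> carrier K" "\<And>u. g u \<in> carrier K" "\<And>u. h u \<in> carrier K"
    using f g h by (auto simp: free_alg_val)
  have fgh: "f \<otimes>\<^bsub>FA\<^esub> h \<oplus>\<^bsub>FA\<^esub> g \<otimes>\<^bsub>FA\<^esub> h
      = (\<lambda>w. (\<Oplus>p\<in>splits w. f (fst p) \<otimes> h (snd p)) \<oplus> (\<Oplus>p\<in>splits w. g (fst p) \<otimes> h (snd p)))"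
   and hfg: "h \<otimes>\<^bsub>FA\<^esub> f \<oplus>\<^bsub>FA\<^esub> h \<otimes>\<^bsub>FA\<^esub> g
      = (\<lambda>w. (\<Oplus>p\<in>splits w. h (fst p) \<otimes> f (snd p)) \<oplus> (\<Oplus>p\<in>splits w. h (fst p) \<otimes> g (snd p)))"
    by (simp_all only: free_alg_add free_alg_mult f g h)
  show "(f \<oplus>\<^bsub>FA\<^esub> g) \<otimes>\<^bsub>FA\<^esub> h = f \<otimes>\<^bsub>FA\<^esub> h \<oplus>\<^bsub>FA\<^esub> g \<otimes>\<^bsub>FA\<^esub> h"
    unfolding fgh free_alg_mult[OF free_alg_add_closed[OF f g] h]
    by (simp add: free_alg_add K.l_distr c K.finsum_addf Pi_def)
  show "h \<otimes>\<^bsub>FA\<^esub> (f \<oplus>\<^bsub>FA\<^esub> g) = h \<otimes>\<^bsub>FA\<^esub> f \<oplus>\<^bsub>FA\<^esub> h \<otimes>\<^bsub>FA\<^esub> g"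
    unfolding hfg free_alg_mult[OF h free_alg_add_closed[OF f g]]
    by (simp add: free_alg_add K.r_distr c K.finsum_addf Pi_def)
qed

lemma free_alg_neg_closed:
  assumes f: "f \<in> carrier FA"
  shows "(\<lambda>w. \<ominus> f w) \<in> carrier FA"
proof -
  have "(\<ominus> f w = \<zero>) = (f w = \<zero>)" for w
    using free_alg_val[OF f] K.add.inv_eq_1_iff by simp
  then show ?thesis
    using f by (simp add: free_alg_carrier_iff)
qed

lemma ring_free_alg: "ring FA"
proof (rule ringI)
  show "abelian_group FA"
  proof (rule abelian_groupI)
    fix f assume f: "f \<in> carrier FA"
    show "\<exists>g\<in>carrier FA. g \<oplus>\<^bsub>FA\<^esub> f = \<zero>\<^bsub>FA\<^esub>"
      using free_alg_neg_closed[OF f]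
      by (intro bexI[where x = "\<lambda>w. \<ominus> f w"]) (simp_all add: free_alg_add free_alg_zero free_alg_val f K.l_neg)
  next
    show "\<zero>\<^bsub>FA\<^esub> \<in> carrier FA"
      by (simp add: free_alg_zero free_alg_carrier_iff)
  qed (simp_all add: free_alg_add_closed[unfolded free_alg_add] free_alg_add free_alg_zero
      free_alg_val K.a_ac)
  show "monoid FA"
    by (rule monoidI)
      (simp_all add: free_alg_mult_closed free_alg_one_closed free_alg_m_assoc free_alg_unit_mult)
qed (simp_all add: free_alg_distr)

end

section \<open>Evaluation of the free algebra\<close>

definition word_prod :: "('r, 'c) ring_scheme \<Rightarrow> ('e \<Rightarrow> 'r) \<Rightarrow> 'e list \<Rightarrow> 'r" where
  "word_prod R l w = foldr (\<lambda>e r. l e \<otimes>\<^bsub>R\<^esub> r) w \<one>\<^bsub>R\<^esub>"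

definition free_eval :: "('k, 'b) ring_scheme \<Rightarrow> ('r, 'c) ring_scheme \<Rightarrow> ('k \<Rightarrow> 'r) \<Rightarrow> ('e \<Rightarrow> 'r)
    \<Rightarrow> ('e list \<Rightarrow> 'k) \<Rightarrow> 'r" where
  "free_eval K R \<phi> l f = (\<Oplus>\<^bsub>R\<^esub>w\<in>{w. f w \<noteq> \<zero>\<^bsub>K\<^esub>}. \<phi> (f w) \<otimes>\<^bsub>R\<^esub> word_prod R l w)"

locale free_alg_eval = free_alg_ring K E + R: ring R
  for K :: "('k, 'b) ring_scheme" (structure) and E :: "'e set" and R :: "('r, 'c) ring_scheme" +
  fixes \<phi> :: "'k \<Rightarrow> 'r" and l :: "'e \<Rightarrow> 'r"
  assumes phi_hom: "\<phi> \<in> ring_hom K R"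
    and phi_central: "\<And>c x. c \<in> carrier K \<Longrightarrow> x \<in> carrier R \<Longrightarrow> \<phi> c \<otimes>\<^bsub>R\<^esub> x = x \<otimes>\<^bsub>R\<^esub> \<phi> c"
    and label_closed: "\<And>e. l e \<in> carrier R"
begin

sublocale phi: ring_hom_ring K R \<phi>
  by (rule ring_hom_ringI2[OF K.ring_axioms R.ring_axioms phi_hom])

abbreviation ev where "ev \<equiv> free_eval K R \<phi> l"
abbreviation wp where "wp \<equiv> word_prod R l"

lemma word_prod_closed: "wp w \<in> carrier R"
  by (induction w) (simp_all add: word_prod_def label_closed)

lemma word_prod_append: "wp (u @ v) = wp u \<otimes>\<^bsub>R\<^esub> wp v"
  by (induction u) (simp_all add: word_prod_def label_closed word_prod_closed[unfolded word_prod_def] R.m_assoc)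

lemma free_eval_superset:
  assumes f: "f \<in> carrier FA" and U: "finite U" "{w. f w \<noteq> \<zero>} \<subseteq> U"
  shows "ev f = (\<Oplus>\<^bsub>R\<^esub>w\<in>U. \<phi> (f w) \<otimes>\<^bsub>R\<^esub> wp w)"
  unfolding free_eval_def
  by (rule R.add.finprod_mono_neutral_cong_left)
    (use U in \<open>auto simp: free_alg_val[OF f] word_prod_closed\<close>)

lemma free_eval_single:
  assumes "f \<in> carrier FA" and "\<And>u. u \<noteq> w \<Longrightarrow> f u = \<zero>"
  shows "ev f = \<phi> (f w) \<otimes>\<^bsub>R\<^esub> wp w"
  using free_eval_superset[OF assms(1), of "{w}"] assms
  by (auto simp: free_alg_val word_prod_closed)

lemma free_eval_closed: "f \<in> carrier FA \<Longrightarrow> ev f \<in> carrier R"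
  unfolding free_eval_def
  by (auto intro!: R.finsum_closed simp: free_alg_val word_prod_closed)

lemma free_eval_add:
  assumes f: "f \<in> carrier FA" and g: "g \<in> carrier FA"
  shows "ev (f \<oplus>\<^bsub>FA\<^esub> g) = ev f \<oplus>\<^bsub>R\<^esub> ev g"
proof -
  define U where "U = {w. f w \<noteq> \<zero>} \<union> {w. g w \<noteq> \<zero>}"
  have U: "finite U" using f g by (simp add: U_def free_alg_finite_support)
  have c: "\<And>u. f u \<in> carrier K" "\<And>u. g u \<in> carrier K"
    using f g by (auto simp: free_alg_val)
  have "{w. (f \<oplus>\<^bsub>FA\<^esub> g) w \<noteq> \<zero>} \<subseteq> U"
    using c by (auto simp: U_def free_alg_add)
  then have "ev (f \<oplus>\<^bsub>FA\<^esub> g) = (\<Oplus>\<^bsub>R\<^esub>w\<in>U. \<phi> (f w \<oplus> g w) \<otimes>\<^bsub>R\<^esub> wp w)"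
    using free_eval_superset[OF free_alg_add_closed[OF f g] U] by (simp add: free_alg_add)
  also have "\<dots> = (\<Oplus>\<^bsub>R\<^esub>w\<in>U. \<phi> (f w) \<otimes>\<^bsub>R\<^esub> wp w) \<oplus>\<^bsub>R\<^esub> (\<Oplus>\<^bsub>R\<^esub>w\<in>U. \<phi> (g w) \<otimes>\<^bsub>R\<^esub> wp w)"
    by (simp add: c R.l_distr word_prod_closed R.finsum_addf Pi_def)
  also have "\<dots> = ev f \<oplus>\<^bsub>R\<^esub> ev g"
    using free_eval_superset[OF f U] free_eval_superset[OF g U] by (simp add: U_def)
  finally show ?thesis .
qed

lemma free_eval_term_mult:
  assumes f: "f \<in> carrier FA" and g: "g \<in> carrier FA"
  shows "\<phi> ((f \<otimes>\<^bsub>FA\<^esub> g) w) \<otimes>\<^bsub>R\<^esub> wp w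
    = (\<Oplus>\<^bsub>R\<^esub>p\<in>splits w. (\<phi> (f (fst p)) \<otimes>\<^bsub>R\<^esub> wp (fst p)) \<otimes>\<^bsub>R\<^esub> (\<phi> (g (snd p)) \<otimes>\<^bsub>R\<^esub> wp (snd p)))"
proof -
  have c: "\<And>u. f u \<in> carrier K" "\<And>u. g u \<in> carrier K"
    using f g by (auto simp: free_alg_val)
  have "\<phi> ((f \<otimes>\<^bsub>FA\<^esub> g) w) \<otimes>\<^bsub>R\<^esub> wp w
      = (\<Oplus>\<^bsub>R\<^esub>p\<in>splits w. \<phi> (f (fst p)) \<otimes>\<^bsub>R\<^esub> \<phi> (g (snd p)) \<otimes>\<^bsub>R\<^esub> wp w)"
    by (simp add: free_alg_mult[OF f g] c Pi_def comp_def R.finsum_ldistr word_prod_closed)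
  also have "\<dots> = (\<Oplus>\<^bsub>R\<^esub>p\<in>splits w. (\<phi> (f (fst p)) \<otimes>\<^bsub>R\<^esub> wp (fst p)) \<otimes>\<^bsub>R\<^esub> (\<phi> (g (snd p)) \<otimes>\<^bsub>R\<^esub> wp (snd p)))"
  proof (rule R.finsum_cong')
    fix p assume "p \<in> splits w"
    then have "\<phi> (f (fst p)) \<otimes>\<^bsub>R\<^esub> \<phi> (g (snd p)) \<otimes>\<^bsub>R\<^esub> wp w
        = \<phi> (f (fst p)) \<otimes>\<^bsub>R\<^esub> (\<phi> (g (snd p)) \<otimes>\<^bsub>R\<^esub> wp (fst p)) \<otimes>\<^bsub>R\<^esub> wp (snd p)"
      by (auto simp: splits_def word_prod_append R.m_assoc c word_prod_closed)
    also have "\<dots> = \<phi> (f (fst p)) \<otimes>\<^bsub>R\<^esub> (wp (fst p) \<otimes>\<^bsub>R\<^esub> \<phi> (g (snd p))) \<otimes>\<^bsub>R\<^esub> wp (snd p)"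
      by (simp add: phi_central c word_prod_closed)
    finally show "\<phi> (f (fst p)) \<otimes>\<^bsub>R\<^esub> \<phi> (g (snd p)) \<otimes>\<^bsub>R\<^esub> wp w
        = (\<phi> (f (fst p)) \<otimes>\<^bsub>R\<^esub> wp (fst p)) \<otimes>\<^bsub>R\<^esub> (\<phi> (g (snd p)) \<otimes>\<^bsub>R\<^esub> wp (snd p))"
      by (simp add: R.m_assoc c word_prod_closed)
  qed (simp_all add: c word_prod_closed)
  finally show ?thesis .
qed

lemma free_eval_mult:
  assumes f: "f \<in> carrier FA" and g: "g \<in> carrier FA"
  shows "ev (f \<otimes>\<^bsub>FA\<^esub> g) = ev f \<otimes>\<^bsub>R\<^esub> ev g"
proof -
  define F where "F u = \<phi> (f u) \<otimes>\<^bsub>R\<^esub> wp u" for u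
  define G where "G v = \<phi> (g v) \<otimes>\<^bsub>R\<^esub> wp v" for v
  define Uf where "Uf = {u. f u \<noteq> \<zero>}"
  define Ug where "Ug = {v. g v \<noteq> \<zero>}"
  define W where "W = (\<lambda>(u, v). u @ v) ` (Uf \<times> Ug)"
  have fin: "finite Uf" "finite Ug" "finite W"
    using f g by (simp_all add: Uf_def Ug_def W_def free_alg_finite_support)
  have c: "\<And>u. F u \<in> carrier R" "\<And>v. G v \<in> carrier R"
    using f g by (auto simp: F_def G_def free_alg_val word_prod_closed)
  have zero: "\<And>u. u \<notin> Uf \<Longrightarrow> F u = \<zero>\<^bsub>R\<^esub>" "\<And>v. v \<notin> Ug \<Longrightarrow> G v = \<zero>\<^bsub>R\<^esub>"
    by (auto simp: F_def G_def Uf_def Ug_def word_prod_closed)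
  have "{w. (f \<otimes>\<^bsub>FA\<^esub> g) w \<noteq> \<zero>} \<subseteq> W"
  proof
    fix w assume "w \<in> {w. (f \<otimes>\<^bsub>FA\<^esub> g) w \<noteq> \<zero>}"
    then obtain u v where "u @ v = w" "f u \<noteq> \<zero>" "g v \<noteq> \<zero>"
      using free_alg_mult_nonzero[OF f g] by blast
    then show "w \<in> W" by (auto simp: W_def Uf_def Ug_def)
  qed
  then have "ev (f \<otimes>\<^bsub>FA\<^esub> g) = (\<Oplus>\<^bsub>R\<^esub>w\<in>W. \<phi> ((f \<otimes>\<^bsub>FA\<^esub> g) w) \<otimes>\<^bsub>R\<^esub> wp w)"
    by (rule free_eval_superset[OF free_alg_mult_closed[OF f g] fin(3)])
  also have "\<dots> = (\<Oplus>\<^bsub>R\<^esub>w\<in>W. \<Oplus>\<^bsub>R\<^esub>p\<in>splits w. F (fst p) \<otimes>\<^bsub>R\<^esub> G (snd p))"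
    by (simp add: free_eval_term_mult f g F_def G_def)
  also have "\<dots> = (\<Oplus>\<^bsub>R\<^esub>p\<in>{(u, v). u @ v \<in> W}. F (fst p) \<otimes>\<^bsub>R\<^esub> G (snd p))"
    by (rule R.finsum_finsum_splits) (simp_all add: fin c)
  also have "\<dots> = (\<Oplus>\<^bsub>R\<^esub>p\<in>Uf \<times> Ug. F (fst p) \<otimes>\<^bsub>R\<^esub> G (snd p))"
  proof (rule sym, rule R.add.finprod_mono_neutral_cong_left)
    have "{(u, v). u @ v \<in> W} \<subseteq> (\<Union>w\<in>W. splits w)" by (auto simp: splits_def)
    then show "finite {(u, v). u @ v \<in> W}" by (rule finite_subset) (simp add: fin)
    show "Uf \<times> Ug \<subseteq> {(u, v). u @ v \<in> W}" by (auto simp: W_def)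
  qed (use zero c in force)+
  also have "\<dots> = (\<Oplus>\<^bsub>R\<^esub>u\<in>Uf. \<Oplus>\<^bsub>R\<^esub>v\<in>Ug. F u \<otimes>\<^bsub>R\<^esub> G v)"
    by (rule R.finsum_Sigma[symmetric]) (simp_all add: fin c)
  also have "\<dots> = (\<Oplus>\<^bsub>R\<^esub>u\<in>Uf. F u \<otimes>\<^bsub>R\<^esub> (\<Oplus>\<^bsub>R\<^esub>v\<in>Ug. G v))"
    by (intro R.finsum_cong') (simp_all add: R.finsum_rdistr fin c Pi_def)
  also have "\<dots> = (\<Oplus>\<^bsub>R\<^esub>u\<in>Uf. F u) \<otimes>\<^bsub>R\<^esub> (\<Oplus>\<^bsub>R\<^esub>v\<in>Ug. G v)"
    by (simp add: R.finsum_ldistr fin c Pi_def)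
  also have "\<dots> = ev f \<otimes>\<^bsub>R\<^esub> ev g"
    by (simp add: free_eval_def F_def G_def Uf_def Ug_def)
  finally show ?thesis .
qed

lemma free_eval_hom: "ev \<in> ring_hom FA R"
proof (rule ring_hom_memI)
  show "ev \<one>\<^bsub>FA\<^esub> = \<one>\<^bsub>R\<^esub>"
    using free_eval_single[OF free_alg_one_closed, of "[]"] by (simp add: free_alg_one word_prod_def)
qed (simp_all add: free_eval_closed free_eval_add free_eval_mult)

lemma free_eval_gen: "e \<in> E \<Longrightarrow> ev (free_gen K e) = l e"
  using free_eval_single[OF free_gen_closed, of e "[e]"]
  by (simp add: free_gen_def word_prod_def label_closed)

lemma free_eval_scalar: "c \<in> carrier K \<Longrightarrow> ev (free_scalar K c) = \<phi> c"
  using free_eval_single[OF free_scalar_closed, of c "[]"]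
  by (simp add: free_scalar_def word_prod_def)

end

section \<open>Homomorphisms out of quotient rings\<close>

context ring_hom_ring
begin

lemma the_elem_image_coset:
  assumes I: "ideal I R" "I \<subseteq> a_kernel R S h" and a: "a \<in> carrier R"
  shows "the_elem (h ` (I +> a)) = h a"
proof -
  have "h ` (I +> a) = (\<lambda>i. h (i \<oplus> a)) ` I"
    unfolding a_r_coset_def' by auto
  also have "\<dots> = (\<lambda>i. h a) ` I"
  proof (rule image_cong[OF refl])
    fix i assume "i \<in> I"
    with I(2) have "i \<in> a_kernel R S h" by blast
    then have "i \<in> carrier R" "h i = \<zero>\<^bsub>S\<^esub>"
      unfolding a_kernel_def' by simp_all
    with a show "h (i \<oplus> a) = h a"
      by (simp only: hom_add S.l_zero hom_closed)
  qed
  also have "\<dots> = {h a}"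
    using additive_subgroup.zero_closed[OF ideal.axioms(1)[OF I(1)]] by blast
  finally show ?thesis by simp
qed

lemma quotient_lift_hom:
  assumes I: "ideal I R" "I \<subseteq> a_kernel R S h"
  shows "(\<lambda>X. the_elem (h ` X)) \<in> ring_hom (R Quot I) S"
proof -
  interpret I: ideal I R by (rule I(1))
  have coset: "\<exists>a\<in>carrier R. X = I +> a" if "X \<in> carrier (R Quot I)" for X
    using that by (auto simp: FactRing_def A_RCOSETS_def')
  have lift: "the_elem (h ` (I +> a)) = h a" if "a \<in> carrier R" for a
    by (rule the_elem_image_coset[OF I that])
  have quot_mult: "(I +> a) \<otimes>\<^bsub>R Quot I\<^esub> (I +> b) = I +> (a \<otimes> b)"
    and quot_add: "(I +> a) \<oplus>\<^bsub>R Quot I\<^esub> (I +> b) = I +> (a \<oplus> b)"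
    if "a \<in> carrier R" "b \<in> carrier R" for a b
    using ring_hom_memE[OF I.rcos_ring_hom] that by auto
  show ?thesis
  proof (rule ring_hom_memI)
    fix X Y assume "X \<in> carrier (R Quot I)" "Y \<in> carrier (R Quot I)"
    then obtain a b where ab: "a \<in> carrier R" "b \<in> carrier R" "X = I +> a" "Y = I +> b"
      using coset by meson
    show "the_elem (h ` (X \<otimes>\<^bsub>R Quot I\<^esub> Y)) = the_elem (h ` X) \<otimes>\<^bsub>S\<^esub> the_elem (h ` Y)"
      unfolding ab(3,4) quot_mult[OF ab(1,2)] lift[OF ab(1)] lift[OF ab(2)] lift[OF R.m_closed[OF ab(1,2)]]
      by (rule hom_mult[OF ab(1,2)])
    show "the_elem (h ` (X \<oplus>\<^bsub>R Quot I\<^esub> Y)) = the_elem (h ` X) \<oplus>\<^bsub>S\<^esub> the_elem (h ` Y)"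
      unfolding ab(3,4) quot_add[OF ab(1,2)] lift[OF ab(1)] lift[OF ab(2)] lift[OF R.add.m_closed[OF ab(1,2)]]
      by (rule hom_add[OF ab(1,2)])
  next
    fix X assume "X \<in> carrier (R Quot I)"
    then obtain a where a: "a \<in> carrier R" "X = I +> a"
      using coset by blast
    show "the_elem (h ` X) \<in> carrier S"
      unfolding a(2) lift[OF a(1)] by (rule hom_closed[OF a(1)])
  next
    show "the_elem (h ` \<one>\<^bsub>R Quot I\<^esub>) = \<one>\<^bsub>S\<^esub>"
      unfolding ring_hom_memE(4)[OF I.rcos_ring_hom, symmetric] lift[OF R.one_closed]
      by (rule hom_one)
  qed
qed

end

section \<open>Products of linear factors\<close>

context UP_ring
begin

lemma lin_closed: "x \<in> carrier R \<Longrightarrow> lin R x \<in> carrier P"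
  unfolding lin_def polyvar_def P_def[symmetric] by simp

lemma lin_prod_closed: "set xs \<subseteq> carrier R \<Longrightarrow> lin_prod R xs \<in> carrier P"
  unfolding lin_prod_def P_def[symmetric] by (induction xs) (auto simp: lin_closed)

lemma lin_prod_Cons: "lin_prod R (x # xs) = lin R x \<otimes>\<^bsub>P\<^esub> lin_prod R xs"
  unfolding lin_prod_def P_def[symmetric] by simp

lemma lin_prod_Nil: "lin_prod R [] = \<one>\<^bsub>P\<^esub>"
  unfolding lin_prod_def P_def[symmetric] by simp

lemma coeff_var_mult:
  assumes Q: "Q \<in> carrier P"
  shows "coeff P (monom P \<one> 1 \<otimes>\<^bsub>P\<^esub> Q) j = (if j = 0 then \<zero> else coeff P Q (j - 1))"
proof (cases j)
  case 0
  then show ?thesis using Q by simp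
next
  case (Suc m)
  have "coeff P (monom P \<one> 1 \<otimes>\<^bsub>P\<^esub> Q) (m + 1) = \<one> \<otimes> coeff P Q m"
    by (rule coeff_monom_mult) (simp_all add: Q)
  then show ?thesis using Suc Q by simp
qed

lemma coeff_lin_mult:
  assumes x: "x \<in> carrier R" and Q: "Q \<in> carrier P"
  shows "coeff P (lin R x \<otimes>\<^bsub>P\<^esub> Q) j = (if j = 0 then \<zero> else coeff P Q (j - 1)) \<ominus> x \<otimes> coeff P Q j"
proof -
  have m1: "monom P \<one> 1 \<in> carrier P" and m0: "monom P x 0 \<in> carrier P" using x by simp_all
  have "lin R x \<otimes>\<^bsub>P\<^esub> Q = monom P \<one> 1 \<otimes>\<^bsub>P\<^esub> Q \<ominus>\<^bsub>P\<^esub> monom P x 0 \<otimes>\<^bsub>P\<^esub> Q"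
    unfolding lin_def polyvar_def P_def[symmetric]
    by (simp add: P.minus_eq P.l_distr P.l_minus m1 m0 Q)
  moreover have "coeff P (monom P x 0 \<otimes>\<^bsub>P\<^esub> Q) j = x \<otimes> coeff P Q j"
    using coeff_monom_mult[OF x Q, of 0 j] by simp
  ultimately show ?thesis
    using coeff_var_mult[OF Q, of j] by (simp add: m1 m0 Q)
qed

lemma coeff_mult_deg_add_monic:
  assumes D: "D \<in> carrier P" and B: "B \<in> carrier P" and monic: "coeff P B (deg R B) = \<one>"
  shows "coeff P (D \<otimes>\<^bsub>P\<^esub> B) (deg R D + deg R B) = coeff P D (deg R D)"
proof -
  let ?d = "deg R D" and ?e = "deg R B"
  have "coeff P D i \<otimes> coeff P B (?d + ?e - i) = \<zero>" if "i \<noteq> ?d" for i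
  proof (cases "?d < i")
    case True
    then show ?thesis using D B by (simp add: deg_aboveD)
  next
    case False
    with that have "?e < ?d + ?e - i" by arith
    then show ?thesis using D B by (simp add: deg_aboveD)
  qed
  then have "coeff P (D \<otimes>\<^bsub>P\<^esub> B) (?d + ?e)
      = (\<Oplus>i\<in>{..?d + ?e}. if ?d = i then coeff P D i \<otimes> coeff P B (?d + ?e - i) else \<zero>)"
    using D B by (auto intro!: R.finsum_cong')
  also have "\<dots> = coeff P D ?d \<otimes> coeff P B ?e"
    by (subst R.add.finprod_singleton) (simp_all add: D B)
  finally show ?thesis using monic D by simp
qed

lemma monic_mult_right_cancel:
  assumes A: "A \<in> carrier P" and A': "A' \<in> carrier P" and B: "B \<in> carrier P"
    and monic: "coeff P B (deg R B) = \<one>" and eq: "A \<otimes>\<^bsub>P\<^esub> B = A' \<otimes>\<^bsub>P\<^esub> B"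
  shows "A = A'"
proof -
  define D where "D = A \<ominus>\<^bsub>P\<^esub> A'"
  have D: "D \<in> carrier P" using A A' by (simp add: D_def)
  have "D \<otimes>\<^bsub>P\<^esub> B = A \<otimes>\<^bsub>P\<^esub> B \<ominus>\<^bsub>P\<^esub> A' \<otimes>\<^bsub>P\<^esub> B"
    by (simp add: D_def P.minus_eq P.l_distr P.l_minus A A' B)
  also have "\<dots> = \<zero>\<^bsub>P\<^esub>" using eq A' B by (simp add: P.minus_eq P.r_neg)
  finally have DB: "D \<otimes>\<^bsub>P\<^esub> B = \<zero>\<^bsub>P\<^esub>" .
  have "D = \<zero>\<^bsub>P\<^esub>"
  proof (rule ccontr)
    assume "D \<noteq> \<zero>\<^bsub>P\<^esub>"
    then have "coeff P D (deg R D) \<noteq> \<zero>" by (rule lcoeff_nonzero[OF _ D])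
    with coeff_mult_deg_add_monic[OF D B monic] DB show False by simp
  qed
  moreover have "A = D \<oplus>\<^bsub>P\<^esub> A'"
    by (simp add: D_def P.minus_eq P.a_assoc P.l_neg A A')
  ultimately show ?thesis
    using A' by simp
qed

lemma coeff_lin_zero: "x \<in> carrier R \<Longrightarrow> coeff P (lin R x) 0 = \<ominus> x"
  unfolding lin_def polyvar_def P_def[symmetric] by (simp add: P.minus_eq)

lemma lin_mult_right_cancel:
  assumes x: "x \<in> carrier R" and y: "y \<in> carrier R" and B: "B \<in> carrier P"
    and monic: "coeff P B (deg R B) = \<one>" and eq: "lin R x \<otimes>\<^bsub>P\<^esub> B = lin R y \<otimes>\<^bsub>P\<^esub> B"
  shows "x = y"
proof -
  have "lin R x = lin R y"
    by (rule monic_mult_right_cancel[OF lin_closed[OF x] lin_closed[OF y] B monic eq])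
  then have "\<ominus> x = \<ominus> y"
    using coeff_lin_zero[OF x] coeff_lin_zero[OF y] by simp
  then show ?thesis
    using x y by (metis R.add.inv_inv)
qed

end

lemma hom_coeff_lin_prod:
  assumes A: "ring A" and B: "ring B" and h: "h \<in> ring_hom A B" and xs: "set xs \<subseteq> carrier A"
  shows "h (coeff (UP A) (lin_prod A xs) j) = coeff (UP B) (lin_prod B (map h xs)) j"
proof -
  interpret UA: UP_ring A "UP A" by (rule UP_ring.intro[OF A])
  interpret UB: UP_ring B "UP B" by (rule UP_ring.intro[OF B])
  interpret h: ring_hom_ring A B h by (rule ring_hom_ringI2[OF A B h])
  show ?thesis
    using xs
  proof (induction xs arbitrary: j)
    case Nil
    then show ?case by (simp add: UA.lin_prod_Nil UB.lin_prod_Nil)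
  next
    case (Cons x xs)
    then have "x \<in> carrier A" "set xs \<subseteq> carrier A" "set (map h xs) \<subseteq> carrier B" by auto
    with Cons.IH show ?case
      by (simp add: UA.lin_prod_Cons UB.lin_prod_Cons UA.coeff_lin_mult UB.coeff_lin_mult
          UA.lin_prod_closed UB.lin_prod_closed a_minus_def)
  qed
qed

section \<open>The graph of right divisors\<close>

lemma is_path_edges: "is_path E v p w \<Longrightarrow> set p \<subseteq> E"
  by (induction rule: is_path.induct) auto

lemma (in free_alg_ring) lin_prod_free_gen_closed:
  assumes "set p \<subseteq> E"
  shows "lin_prod FA (map (free_gen K) p) \<in> carrier (UP FA)"
proof -
  interpret UP_ring FA "UP FA" by (rule UP_ring.intro[OF ring_free_alg])
  show ?thesis
    using assms by (intro lin_prod_closed) (auto simp: free_gen_closed)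
qed

lemma path_relations_closed:
  fixes E :: "('v \<times> 'v) set"
  assumes K: "ring K"
  shows "path_relations K V E \<subseteq> carrier (free_alg K E)"
proof
  interpret free_alg_ring K E by (rule free_alg_ring.intro[OF K])
  interpret UP_ring FA "UP FA" by (rule UP_ring.intro[OF ring_free_alg])
  fix r assume "r \<in> path_relations K V E"
  then obtain v w p q j where "is_path E v p w" "is_path E v q w"
    and r: "r = coeff (UP FA) (lin_prod FA (map (free_gen K) p)) j \<ominus>\<^bsub>FA\<^esub>
                coeff (UP FA) (lin_prod FA (map (free_gen K) q)) j"
    unfolding path_relations_def by blast
  then have "set p \<subseteq> E" "set q \<subseteq> E" by (simp_all add: is_path_edges)
  then show "r \<in> carrier FA"
    unfolding r by (simp add: lin_prod_free_gen_closed)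
qed

lemma ideal_rel_ideal: "ring K \<Longrightarrow> ideal (rel_ideal K V E) (free_alg K E)"
  unfolding rel_ideal_def
  by (rule ring.genideal_ideal[OF free_alg_ring.ring_free_alg path_relations_closed])
    (simp_all add: free_alg_ring.intro)

lemma ring_graph_alg: "ring K \<Longrightarrow> ring (graph_alg K V E)"
  unfolding graph_alg_def by (rule ideal.quotient_is_ring[OF ideal_rel_ideal])

lemma graph_class_hom: "ring K \<Longrightarrow> graph_class K V E \<in> ring_hom (free_alg K E) (graph_alg K V E)"
  unfolding graph_class_def[abs_def] graph_alg_def by (rule ideal.rcos_ring_hom[OF ideal_rel_ideal])

text \<open>Off the edges the label is the junk value \<open>\<zero>\<close>, so labels always lie in the carrier.\<close>

definition edge_label :: "('r, 'c) ring_scheme \<Rightarrow> (nat \<Rightarrow> 'r) \<times> (nat \<Rightarrow> 'r) \<Rightarrow> 'r" where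
  "edge_label R e =
    (if \<exists>x \<in> carrier R. fst e = lin R x \<otimes>\<^bsub>UP R\<^esub> snd e
     then SOME x. x \<in> carrier R \<and> fst e = lin R x \<otimes>\<^bsub>UP R\<^esub> snd e else \<zero>\<^bsub>R\<^esub>)"

lemma edge_label_closed: "ring R \<Longrightarrow> edge_label R e \<in> carrier R"
  unfolding edge_label_def by (auto intro: someI2_ex ring.ring_simprules(2))

lemma edge_label_eq:
  assumes R: "ring R" and e: "(B1, B2) \<in> div_edges R F n S"
    and x: "x \<in> carrier R" and B1: "B1 = lin R x \<otimes>\<^bsub>UP R\<^esub> B2"
  shows "edge_label R (B1, B2) = x"
proof -
  interpret UP_ring R "UP R" by (rule UP_ring.intro[OF R])
  have ex: "\<exists>y. y \<in> carrier R \<and> B1 = lin R y \<otimes>\<^bsub>UP R\<^esub> B2"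
    using x B1 by blast
  have "edge_label R (B1, B2) \<in> carrier R \<and> B1 = lin R (edge_label R (B1, B2)) \<otimes>\<^bsub>UP R\<^esub> B2"
    using someI_ex[OF ex] x B1 by (auto simp: edge_label_def)
  moreover have "B2 \<in> carrier (UP R)" "coeff (UP R) B2 (deg R B2) = \<one>\<^bsub>R\<^esub>"
    using e by (simp_all add: div_edges_def div_vertices_def monic_poly_def)
  ultimately show ?thesis
    using lin_mult_right_cancel[OF _ x] B1 by metis
qed

lemma is_path_lin_prod:
  assumes R: "ring R" and S: "S \<subseteq> carrier R"
    and p: "is_path (div_edges R F n S) B p C" and C: "C \<in> carrier (UP R)"
  shows "B = lin_prod R (map (edge_label R) p) \<otimes>\<^bsub>UP R\<^esub> C"
  using p C
proof (induction rule: is_path.induct)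
  case (path_nil v)
  interpret UP_ring R "UP R" by (rule UP_ring.intro[OF R])
  show ?case by (simp add: lin_prod_Nil path_nil)
next
  case (path_cons B1 B2 es B)
  interpret UP_ring R "UP R" by (rule UP_ring.intro[OF R])
  obtain x where x: "x \<in> S" "B1 = lin R x \<otimes>\<^bsub>UP R\<^esub> B2"
    using path_cons.hyps(1) by (auto simp: div_edges_def)
  with S have "edge_label R (B1, B2) = x"
    by (intro edge_label_eq[OF R path_cons.hyps(1)]) auto
  moreover have "set (map (edge_label R) es) \<subseteq> carrier R"
    using edge_label_closed[OF R] by auto
  ultimately show ?case
    using x S path_cons.IH path_cons.prems
    by (auto simp: lin_prod_Cons lin_closed lin_prod_closed P.m_assoc)
qed

lemma hom_coeff_lin_prod_labels:
  assumes A: "ring A" and R: "ring R" and h: "h \<in> ring_hom A R"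
    and x: "\<And>e. e \<in> set p \<Longrightarrow> x e \<in> carrier A"
    and label: "\<And>e. e \<in> set p \<Longrightarrow> h (x e) = l e"
  shows "h (coeff (UP A) (lin_prod A (map x p)) j) = coeff (UP R) (lin_prod R (map l p)) j"
proof -
  have "set (map x p) \<subseteq> carrier A"
    using x by auto
  moreover have "map h (map x p) = map l p"
    using label by simp
  ultimately show ?thesis
    using hom_coeff_lin_prod[OF A R h, of "map x p" j] by (simp only:)
qed

lemma path_relations_kernel:
  assumes K: "ring K" and R: "ring R" and S: "S \<subseteq> carrier R"
    and h: "h \<in> ring_hom (free_alg K (div_edges R F n S)) R"
    and gen: "\<And>e. e \<in> div_edges R F n S \<Longrightarrow> h (free_gen K e) = edge_label R e"
  shows "path_relations K (div_vertices R F n) (div_edges R F n S)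
           \<subseteq> a_kernel (free_alg K (div_edges R F n S)) R h"
proof
  let ?E = "div_edges R F n S"
  interpret free_alg_ring K ?E by (rule free_alg_ring.intro[OF K])
  interpret UP_ring R "UP R" by (rule UP_ring.intro[OF R])
  interpret FA: UP_ring FA "UP FA" by (rule UP_ring.intro[OF ring_free_alg])
  interpret h: ring_hom_ring FA R h by (rule ring_hom_ringI2[OF ring_free_alg R h])
  let ?c = "\<lambda>p j. coeff (UP FA) (lin_prod FA (map (free_gen K) p)) j"
  let ?labels = "\<lambda>p. lin_prod R (map (edge_label R) p)"
  have image: "h (?c p j) = coeff (UP R) (?labels p) j" if "set p \<subseteq> ?E" for p j
    using that by (intro hom_coeff_lin_prod_labels[OF ring_free_alg R h]) (auto simp: free_gen_closed gen)
  fix r assume r_rel: "r \<in> path_relations K (div_vertices R F n) ?E"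
  then obtain v w p q j where paths: "is_path ?E v p w" "is_path ?E v q w"
    and w: "w \<in> div_vertices R F n" and r: "r = ?c p j \<ominus>\<^bsub>FA\<^esub> ?c q j"
    unfolding path_relations_def by blast
  have edges: "set p \<subseteq> ?E" "set q \<subseteq> ?E"
    using paths by (simp_all add: is_path_edges)
  have w_monic: "w \<in> carrier (UP R)" "coeff (UP R) w (deg R w) = \<one>\<^bsub>R\<^esub>"
    using w by (simp_all add: div_vertices_def monic_poly_def)
  have labels_closed: "set (map (edge_label R) p') \<subseteq> carrier R" for p'
    using edge_label_closed[OF R] by auto
  have "?labels p \<otimes>\<^bsub>UP R\<^esub> w = ?labels q \<otimes>\<^bsub>UP R\<^esub> w"
    using is_path_lin_prod[OF R S paths(1) w_monic(1)] is_path_lin_prod[OF R S paths(2) w_monic(1)]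
    by simp
  then have same: "?labels p = ?labels q"
    by (rule monic_mult_right_cancel[OF lin_prod_closed lin_prod_closed w_monic, OF labels_closed labels_closed])
  have c_closed: "?c p' j \<in> carrier FA" if "set p' \<subseteq> ?E" for p'
    using that by (simp add: FA.coeff_closed lin_prod_free_gen_closed)
  have "h r = h (?c p j) \<oplus>\<^bsub>R\<^esub> \<ominus>\<^bsub>R\<^esub> h (?c q j)"
    unfolding r a_minus_def using c_closed[OF edges(1)] c_closed[OF edges(2)]
    by (simp add: h.hom_add h.hom_a_inv ring.ring_simprules(3)[OF ring_free_alg])
  also have "\<dots> = coeff (UP R) (?labels q) j \<oplus>\<^bsub>R\<^esub> \<ominus>\<^bsub>R\<^esub> coeff (UP R) (?labels q) j"
    by (simp only: image[OF edges(1)] image[OF edges(2)] same)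
  also have "\<dots> = \<zero>\<^bsub>R\<^esub>"
    by (rule R.r_neg[OF coeff_closed[OF lin_prod_closed[OF labels_closed]]])
  finally have "h r = \<zero>\<^bsub>R\<^esub>" .
  moreover have "r \<in> carrier FA"
    using path_relations_closed[OF K] r_rel by blast
  ultimately show "r \<in> a_kernel FA R h"
    unfolding a_kernel_def' by blast
qed

lemma coeff_graph_path_poly_image:
  assumes K: "ring K" and R: "ring R" and S: "S \<subseteq> carrier R"
    and \<alpha>: "\<alpha> \<in> ring_hom (graph_alg K V (div_edges R F n S)) R"
    and gen: "\<And>e. e \<in> div_edges R F n S \<Longrightarrow>
                \<alpha> (graph_class K V (div_edges R F n S) (free_gen K e)) = edge_label R e"
    and p: "is_path (div_edges R F n S) F p \<one>\<^bsub>UP R\<^esub>"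
  shows "\<alpha> (coeff (UP (graph_alg K V (div_edges R F n S))) (graph_path_poly K V (div_edges R F n S) p) j)
    = coeff (UP R) F j"
proof -
  let ?E = "div_edges R F n S"
  interpret UP_ring R "UP R" by (rule UP_ring.intro[OF R])
  have "set (map (edge_label R) p) \<subseteq> carrier R"
    using edge_label_closed[OF R] by auto
  then have F: "F = lin_prod R (map (edge_label R) p)"
    using is_path_lin_prod[OF R S p] by (simp add: lin_prod_closed)
  have "set p \<subseteq> ?E"
    by (rule is_path_edges[OF p])
  then have gens: "\<And>e. e \<in> set p \<Longrightarrow> graph_class K V ?E (free_gen K e) \<in> carrier (graph_alg K V ?E)"
    and labels: "\<And>e. e \<in> set p \<Longrightarrow> \<alpha> (graph_class K V ?E (free_gen K e)) = edge_label R e"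
    using ring_hom_closed[OF graph_class_hom[OF K] free_alg_ring.free_gen_closed[OF free_alg_ring.intro[OF K]]]
      gen by blast+
  have "\<alpha> (coeff (UP (graph_alg K V ?E)) (graph_path_poly K V ?E p) j)
      = coeff (UP R) (lin_prod R (map (edge_label R) p)) j"
    unfolding graph_path_poly_def
    by (rule hom_coeff_lin_prod_labels[OF ring_graph_alg[OF K] R \<alpha>]) (simp_all add: gens labels)
  then show ?thesis
    by (simp only: F[symmetric])
qed

lemma graph_alg_label_hom:
  assumes K: "ring K" and R: "ring R" and \<phi>: "\<phi> \<in> ring_hom K R"
    and central: "\<And>c x. c \<in> carrier K \<Longrightarrow> x \<in> carrier R \<Longrightarrow> \<phi> c \<otimes>\<^bsub>R\<^esub> x = x \<otimes>\<^bsub>R\<^esub> \<phi> c"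
    and S: "S \<subseteq> carrier R"
  obtains \<alpha> where "\<alpha> \<in> ring_hom (graph_alg K (div_vertices R F n) (div_edges R F n S)) R"
    and "\<And>c. c \<in> carrier K \<Longrightarrow>
           \<alpha> (graph_class K (div_vertices R F n) (div_edges R F n S) (free_scalar K c)) = \<phi> c"
    and "\<And>e. e \<in> div_edges R F n S \<Longrightarrow>
           \<alpha> (graph_class K (div_vertices R F n) (div_edges R F n S) (free_gen K e)) = edge_label R e"
proof -
  let ?V = "div_vertices R F n" and ?E = "div_edges R F n S"
  let ?ev = "free_eval K R \<phi> (edge_label R)"
  interpret ev: free_alg_eval K ?E R \<phi> "edge_label R"
    by (intro free_alg_eval.intro free_alg_eval_axioms.intro free_alg_ring.intro K R \<phi> central
        edge_label_closed)
  interpret ev_hom: ring_hom_ring "free_alg K ?E" R ?ev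
    by (rule ring_hom_ringI2[OF ev.ring_free_alg R ev.free_eval_hom])
  have I: "ideal (rel_ideal K ?V ?E) (free_alg K ?E)"
    by (rule ideal_rel_ideal[OF K])
  have kernel: "rel_ideal K ?V ?E \<subseteq> a_kernel (free_alg K ?E) R ?ev"
    unfolding rel_ideal_def
    by (rule ring.genideal_minimal[OF ev.ring_free_alg ev_hom.kernel_is_ideal
          path_relations_kernel[OF K R S ev.free_eval_hom ev.free_eval_gen]])
  have lift_class: "the_elem (?ev ` graph_class K ?V ?E f) = ?ev f" if "f \<in> carrier (free_alg K ?E)" for f
    unfolding graph_class_def by (rule ev_hom.the_elem_image_coset[OF I kernel that])
  show thesis
  proof (rule that[of "\<lambda>X. the_elem (?ev ` X)"])
    show "(\<lambda>X. the_elem (?ev ` X)) \<in> ring_hom (graph_alg K ?V ?E) R"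
      unfolding graph_alg_def by (rule ev_hom.quotient_lift_hom[OF I kernel])
  qed (simp_all add: lift_class ev.free_scalar_closed ev.free_eval_scalar ev.free_gen_closed ev.free_eval_gen)
qed

theorem theorem2p5p1:
  fixes K :: "('k, 'b) ring_scheme" and R :: "('r, 'c) ring_scheme"
    and \<phi> :: "'k \<Rightarrow> 'r" and P :: "nat \<Rightarrow> 'r" and n :: nat
    and S :: "'r set" and a :: "nat \<Rightarrow> 'r"
  assumes K: "field K"
    and R: "ring R"
    and alg: "\<phi> \<in> ring_hom K R"
    and central: "\<And>c x. c \<in> carrier K \<Longrightarrow> x \<in> carrier R \<Longrightarrow> \<phi> c \<otimes>\<^bsub>R\<^esub> x = x \<otimes>\<^bsub>R\<^esub> \<phi> c"
    and P: "monic_poly R P" "deg R P = n"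
    and S: "\<And>x. x \<in> S \<Longrightarrow> pseudo_root R P x"
    and a: "\<And>i. i < n \<Longrightarrow> a i \<in> S"
    and Pfac: "P = lin_prod R (map a [0..<n])"
  shows "\<exists>\<alpha>. \<alpha> \<in> ring_hom (graph_alg K (div_vertices R P n) (div_edges R P n S)) R
      \<and> (\<forall>c \<in> carrier K. \<alpha> (graph_class K (div_vertices R P n) (div_edges R P n S)
                                (free_scalar K c)) = \<phi> c)
      \<and> (\<forall>B1 B2 x. (B1, B2) \<in> div_edges R P n S \<longrightarrow> x \<in> carrier R
              \<longrightarrow> B1 = lin R x \<otimes>\<^bsub>UP R\<^esub> B2
              \<longrightarrow> \<alpha> (graph_class K (div_vertices R P n) (div_edges R P n S)
                                (free_gen K (B1, B2))) = x)
      \<and> (\<forall>p. is_path (div_edges R P n S) P p \<one>\<^bsub>UP R\<^esub> \<longrightarrow>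
            (\<forall>j. \<alpha> (coeff (UP (graph_alg K (div_vertices R P n) (div_edges R P n S)))
                       (graph_path_poly K (div_vertices R P n) (div_edges R P n S) p) j)
                 = coeff (UP R) P j))"
proof -
  \<comment> \<open>The hypotheses on \<open>P\<close> and \<open>a\<close> only ensure that paths from \<open>P\<close> to \<open>1\<close> exist.\<close>
  have K_ring: "ring K" by (rule field.is_ring[OF K])
  have S_closed: "S \<subseteq> carrier R" using S by (auto simp: pseudo_root_def)
  obtain \<alpha> where \<alpha>: "\<alpha> \<in> ring_hom (graph_alg K (div_vertices R P n) (div_edges R P n S)) R"
    and scalar: "\<And>c. c \<in> carrier K \<Longrightarrow>
           \<alpha> (graph_class K (div_vertices R P n) (div_edges R P n S) (free_scalar K c)) = \<phi> c"
    and gen: "\<And>e. e \<in> div_edges R P n S \<Longrightarrow>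
           \<alpha> (graph_class K (div_vertices R P n) (div_edges R P n S) (free_gen K e)) = edge_label R e"
    using graph_alg_label_hom[OF K_ring R alg central S_closed] by blast
  show ?thesis
  proof (intro exI[where x = \<alpha>] conjI ballI allI impI)
    fix B1 B2 x
    assume "(B1, B2) \<in> div_edges R P n S" "x \<in> carrier R" "B1 = lin R x \<otimes>\<^bsub>UP R\<^esub> B2"
    then show "\<alpha> (graph_class K (div_vertices R P n) (div_edges R P n S) (free_gen K (B1, B2))) = x"
      by (simp add: gen edge_label_eq[OF R])
  qed (simp_all add: \<alpha> scalar coeff_graph_path_poly_image[OF K_ring R S_closed \<alpha> gen])
qed

end
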